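(* Let $\Delta$ be an $n$-dimensional simplex in $\mathbb{R}^n$, and let $K \subseteq \Delta$ be a compact convex set. Suppose that $K \cap F = \emptyset$ for every face $F$ of $\Delta$ such that $\dim(F) \leq n-2$. Then (i) for each unit vector $u$, the projection $K_u$ can be translated (within $u^\perp$) into the relative interior of $\Delta_u$; (ii) there exists $\epsilon > 1$ such that, for each unit vector $u$, the projection $\Delta_u$ contains a translate of $\epsilon K_u$ (the same $\epsilon$ for all $u$).
   Context: For a unit vector $u$ and a set $S\subseteq\mathbb{R}^n$, $S_u$ denotes the orthogonal projection of $S$ onto the hyperplane $u^\perp$. *)

theory Defs
  imports "HOL-Analysis.Analysis"
begin

definition proj_perp :: "'a::euclidean_space \<Rightarrow> 'a set \<Rightarrow> 'a set" where
  "proj_perp u S = (\<lambda>x. x - (x \<bullet> u) *\<^sub>R u) ` S"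

end

theory Submission
  imports Defs
begin

text \<open>
  Write \<open>\<Delta> = convex hull V\<close>. Since \<open>K\<close> is compact and misses every face of codimension two, the
  barycentric weights of points of \<open>K\<close> satisfy \<open>w a + w b \<ge> \<delta>\<close> for all vertices \<open>a \<noteq> b\<close>,
  for one \<open>\<delta> > 0\<close>. Given a direction \<open>u = (\<Sum>v\<in>V. \<mu> v *\<^sub>R v)\<close> with \<open>sum \<mu> V = 0\<close>, let \<open>c\<close> be
  the point of \<open>\<Delta>\<close> with weights \<open>\<bar>\<mu> v\<bar> / (\<Sum>v\<in>V. \<bar>\<mu> v\<bar>)\<close>. For \<open>\<epsilon> = 2 / (2 - \<delta>)\<close>
  and \<open>y \<in> K\<close> some point \<open>\<epsilon> y + (1 - \<epsilon>) c + s u\<close> of the line through \<open>\<epsilon> y + (1 - \<epsilon>) c\<close>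
  in direction \<open>u\<close> lies in \<open>\<Delta>\<close>: the weights that could become negative are paired off by the
  bound on \<open>w a + w b\<close>. Projecting along \<open>u\<close> gives (ii), and shrinking towards a relative
  interior point of \<open>\<Delta>\<^sub>u\<close> turns (ii) into (i).
\<close>

definition barycentric_coords :: "'a::real_vector set \<Rightarrow> 'a \<Rightarrow> ('a \<Rightarrow> real) \<Rightarrow> bool" where
  "barycentric_coords V y w \<longleftrightarrow> (\<forall>v\<in>V. 0 \<le> w v) \<and> sum w V = 1 \<and> (\<Sum>v\<in>V. w v *\<^sub>R v) = y"

lemma convex_hull_finite_barycentric:
  "finite V \<Longrightarrow> y \<in> convex hull V \<longleftrightarrow> (\<exists>w. barycentric_coords V y w)"
  unfolding barycentric_coords_def convex_hull_finite by auto

lemma sum_remove_pair: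
  assumes "finite V" "a \<in> V" "b \<in> V" "a \<noteq> b"
  shows "sum f V = f a + f b + sum f (V - {a, b})"
proof -
  have "sum f V = f a + sum f (V - {a})" using assms by (simp add: sum.remove)
  also have "sum f (V - {a}) = f b + sum f (V - {a} - {b})"
    using assms by (intro sum.remove) auto
  finally show ?thesis by (simp add: add.assoc insert_commute Diff_insert2[symmetric])
qed

lemma pair_weight_ge_dist_opposite_face:
  fixes V :: "'a::real_normed_vector set"
  assumes fin: "finite V" and ab: "a \<in> V" "b \<in> V" "a \<noteq> b"
    and w: "barycentric_coords V y w"
    and R: "\<forall>v\<in>V. norm v \<le> R" "0 < R"
    and far: "\<forall>y'\<in>convex hull (V - {a, b}). d \<le> dist y y'"
  shows "min 1 (d / (2 * R)) \<le> w a + w b"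
proof (cases "w a + w b \<ge> 1")
  case False
  define \<eta> where "\<eta> = w a + w b"
  define W where "W = V - {a, b}"
  have w0: "\<forall>v\<in>V. 0 \<le> w v" and wy: "(\<Sum>v\<in>V. w v *\<^sub>R v) = y"
    using w unfolding barycentric_coords_def by auto
  have sumV: "sum f V = f a + f b + sum f W" for f :: "'a \<Rightarrow> 'c::comm_monoid_add"
    unfolding W_def using sum_remove_pair[OF fin ab] .
  have sW: "sum w W = 1 - \<eta>"
    using sumV[of w] w unfolding \<eta>_def barycentric_coords_def by simp
  have \<eta>: "0 \<le> \<eta>" "\<eta> < 1" using False w0 ab \<eta>_def by auto
  define y' where "y' = (\<Sum>v\<in>W. (w v / (1 - \<eta>)) *\<^sub>R v)"
  have "barycentric_coords W y' (\<lambda>v. w v / (1 - \<eta>))"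
    unfolding barycentric_coords_def y'_def
    using w0 sW \<eta> by (auto simp: W_def sum_divide_distrib[symmetric])
  then have "y' \<in> convex hull W"
    using convex_hull_finite_barycentric[of W] fin W_def by blast
  then have "d \<le> dist y y'" using far W_def by auto
  have ny': "norm y' \<le> R"
  proof -
    have "norm y' \<le> (\<Sum>v\<in>W. (w v / (1 - \<eta>)) * R)"
      unfolding y'_def using w0 \<eta> R
      by (intro order.trans[OF norm_sum] sum_mono) (auto simp: W_def intro!: mult_left_mono divide_right_mono)
    also have "\<dots> = R"
      using sW \<eta> by (simp add: sum_distrib_right[symmetric] sum_divide_distrib[symmetric])
    finally show ?thesis .
  qed
  have "y = w a *\<^sub>R a + w b *\<^sub>R b + (1 - \<eta>) *\<^sub>R y'"
    using sumV[of "\<lambda>v. w v *\<^sub>R v"] \<eta> wy unfolding y'_def by (simp add: scaleR_sum_right)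
  then have "dist y y' = norm (w a *\<^sub>R a + w b *\<^sub>R b - \<eta> *\<^sub>R y')"
    by (simp add: dist_norm scaleR_diff_left)
  also have "\<dots> \<le> norm (w a *\<^sub>R a) + norm (w b *\<^sub>R b) + norm (\<eta> *\<^sub>R y')"
    by (smt (verit) norm_triangle_ineq norm_triangle_ineq4)
  also have "\<dots> \<le> w a * R + w b * R + \<eta> * R"
    using w0 ab R ny' \<eta> by (intro add_mono) (auto intro!: mult_left_mono)
  also have "\<dots> = 2 * R * \<eta>" unfolding \<eta>_def by (simp add: algebra_simps)
  finally have "d / (2 * R) \<le> \<eta>" using \<open>d \<le> dist y y'\<close> R by (simp add: field_simps)
  then show ?thesis unfolding \<eta>_def by linarith
qed simp

lemma pair_weights_bounded_below:
  fixes V K :: "'a::euclidean_space set"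
  assumes "finite V" "compact K"
    and disj: "\<And>a b. a \<in> V \<Longrightarrow> b \<in> V \<Longrightarrow> a \<noteq> b \<Longrightarrow> K \<inter> convex hull (V - {a, b}) = {}"
  obtains \<delta> where "0 < \<delta>" "\<delta> \<le> 1"
    "\<And>y w a b. y \<in> K \<Longrightarrow> barycentric_coords V y w \<Longrightarrow> a \<in> V \<Longrightarrow> b \<in> V \<Longrightarrow> a \<noteq> b
      \<Longrightarrow> \<delta> \<le> w a + w b"
proof -
  define G where "G = (\<Union>a\<in>V. \<Union>b\<in>V - {a}. convex hull (V - {a, b}))"
  have "closed G" unfolding G_def using \<open>finite V\<close>
    by (intro closed_UN finite_Diff ballI compact_imp_closed compact_convex_hull finite_imp_compact)
      auto
  moreover have "K \<inter> G = {}" unfolding G_def using disj by blast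
  ultimately obtain d where d: "d > 0" and far: "\<forall>x\<in>K. \<forall>y\<in>G. d \<le> dist x y"
    using separate_compact_closed[OF \<open>compact K\<close>] by blast
  obtain R where R: "R > 0" "\<forall>v\<in>V. norm v \<le> R"
    using finite_imp_bounded[OF \<open>finite V\<close>] bounded_pos by blast
  show ?thesis
  proof
    show "0 < min 1 (d / (2 * R))" "min 1 (d / (2 * R)) \<le> 1" using d R by auto
    fix y w a b assume "y \<in> K" "barycentric_coords V y w" "a \<in> V" "b \<in> V" "a \<noteq> b"
    with far show "min 1 (d / (2 * R)) \<le> w a + w b"
      by (intro pair_weight_ge_dist_opposite_face[OF \<open>finite V\<close> _ _ _ _ R(2,1)]) (auto simp: G_def)
  qed
qed

lemma aff_dim_convex_hull_Diff_pair:
  assumes "\<not> affine_dependent V" "a \<in> V" "b \<in> V" "a \<noteq> b"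
  shows "aff_dim (convex hull (V - {a, b})) = int (card V) - 3"
proof -
  have "finite V" using assms(1) aff_independent_finite by blast
  have "card {a, b} \<le> card V"
    using assms \<open>finite V\<close> by (intro card_mono) auto
  then have "int (card (V - {a, b})) = int (card V) - 2"
    using assms by (simp add: card_Diff_subset of_nat_diff)
  moreover have "\<not> affine_dependent (V - {a, b})"
    using assms(1) affine_independent_subset by blast
  ultimately show ?thesis by (simp add: aff_dim_affine_independent aff_dim_convex_hull)
qed

lemma real_between_finite_families:
  fixes L U :: "'b \<Rightarrow> real"
  assumes "finite A" "finite B" "\<And>a b. a \<in> A \<Longrightarrow> b \<in> B \<Longrightarrow> L a \<le> U b"
  obtains s where "\<forall>a\<in>A. L a \<le> s" "\<forall>b\<in>B. s \<le> U b"
proof (cases "A = {}")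
  case True
  then show ?thesis using that[of "if B = {} then 0 else Min (U ` B)"] assms(2) by auto
next
  case False
  then show ?thesis using that[of "Max (L ` A)"] assms by (simp add: Max_le_iff)
qed

lemma exists_shift_nonneg:
  fixes w \<mu> :: "'b \<Rightarrow> real"
  assumes fin: "finite V" and w0: "\<forall>v\<in>V. 0 \<le> w v"
    and pair: "\<And>a b. a \<in> V \<Longrightarrow> b \<in> V \<Longrightarrow> a \<noteq> b \<Longrightarrow> \<delta> \<le> w a + w b"
    and \<mu>: "\<forall>v\<in>V. \<bar>\<mu> v\<bar> \<le> m" and m: "m > 0"
    and \<epsilon>: "2 * (\<epsilon> - 1) \<le> \<epsilon> * \<delta>" "\<epsilon> \<ge> 0"
  obtains s where "\<forall>v\<in>V. 0 \<le> \<epsilon> * w v - ((\<epsilon> - 1) / m) * \<bar>\<mu> v\<bar> + s * \<mu> v"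
proof -
  define \<sigma> where "\<sigma> = (\<epsilon> - 1) / m"
  \<comment> \<open>The constraint at \<open>v\<close> reads \<open>L v \<le> s\<close> if \<open>\<mu> v > 0\<close> and \<open>s \<le> U v\<close> if \<open>\<mu> v < 0\<close>.\<close>
  define L where "L v = \<sigma> - \<epsilon> * w v / \<mu> v" for v
  define U where "U v = \<epsilon> * w v / (- \<mu> v) - \<sigma>" for v
  obtain s where sL: "\<forall>a\<in>{v\<in>V. \<mu> v > 0}. L a \<le> s" and sU: "\<forall>b\<in>{v\<in>V. \<mu> v < 0}. s \<le> U b"
  proof (rule real_between_finite_families)
    show "finite {v \<in> V. 0 < \<mu> v}" "finite {v \<in> V. \<mu> v < 0}" using fin by auto
    fix a b assume a: "a \<in> {v \<in> V. 0 < \<mu> v}" and b: "b \<in> {v \<in> V. \<mu> v < 0}"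
    then have "a \<noteq> b" by auto
    have "\<epsilon> * w a / m \<le> \<epsilon> * w a / \<mu> a"
      using a \<mu> w0 \<epsilon> by (intro divide_left_mono) auto
    moreover have "\<epsilon> * w b / m \<le> \<epsilon> * w b / (- \<mu> b)"
      using b \<mu> w0 \<epsilon> m by (intro divide_left_mono) (auto simp: mult_pos_neg)
    moreover have "2 * \<sigma> \<le> \<epsilon> * \<delta> / m" unfolding \<sigma>_def using \<epsilon> m by (simp add: divide_right_mono)
    moreover have "\<dots> \<le> \<epsilon> * (w a + w b) / m"
      using pair[of a b] \<open>a \<noteq> b\<close> a b \<epsilon> m by (intro divide_right_mono mult_left_mono) auto
    ultimately show "L a \<le> U b" unfolding L_def U_def by (simp add: add_divide_distrib distrib_left)
  qed
  have "0 \<le> \<epsilon> * w v - \<sigma> * \<bar>\<mu> v\<bar> + s * \<mu> v" if v: "v \<in> V" for v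
  proof -
    consider "\<mu> v > 0" | "\<mu> v < 0" | "\<mu> v = 0" by linarith
    then show ?thesis
    proof cases
      case 1
      then have "0 \<le> \<mu> v * (s - L v)" using sL v by simp
      also have "\<mu> v * (s - L v) = \<epsilon> * w v - \<sigma> * \<bar>\<mu> v\<bar> + s * \<mu> v"
        unfolding L_def using 1 by (simp add: field_simps)
      finally show ?thesis .
    next
      case 2
      then have "0 \<le> (- \<mu> v) * (U v - s)" using sU v by (intro mult_nonneg_nonneg) auto
      also have "(- \<mu> v) * (U v - s) = \<epsilon> * w v - \<sigma> * \<bar>\<mu> v\<bar> + s * \<mu> v"
        unfolding U_def using 2 by (simp add: field_simps)
      finally show ?thesis .
    qed (use w0 v \<epsilon> in simp)
  qed
  then show ?thesis using that unfolding \<sigma>_def by blast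
qed

lemma scaled_point_shift_in_convex_hull:
  fixes V :: "'a::real_vector set" and \<mu> :: "'a \<Rightarrow> real"
  defines "m \<equiv> (\<Sum>v\<in>V. \<bar>\<mu> v\<bar>)"
  assumes fin: "finite V" and w: "barycentric_coords V y w"
    and pair: "\<And>a b. a \<in> V \<Longrightarrow> b \<in> V \<Longrightarrow> a \<noteq> b \<Longrightarrow> \<delta> \<le> w a + w b"
    and \<mu>0: "sum \<mu> V = 0" and m: "m > 0"
    and \<epsilon>: "2 * (\<epsilon> - 1) \<le> \<epsilon> * \<delta>" "\<epsilon> \<ge> 0"
  obtains s where "\<epsilon> *\<^sub>R y + (1 - \<epsilon>) *\<^sub>R (\<Sum>v\<in>V. (\<bar>\<mu> v\<bar> / m) *\<^sub>R v)
      + s *\<^sub>R (\<Sum>v\<in>V. \<mu> v *\<^sub>R v) \<in> convex hull V"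
proof -
  define \<sigma> where "\<sigma> = (\<epsilon> - 1) / m"
  have w0: "\<forall>v\<in>V. 0 \<le> w v" and w1: "sum w V = 1" and wy: "(\<Sum>v\<in>V. w v *\<^sub>R v) = y"
    using w unfolding barycentric_coords_def by auto
  have "\<forall>v\<in>V. \<bar>\<mu> v\<bar> \<le> m" unfolding m_def using fin by (auto intro: member_le_sum)
  then obtain s where s: "\<forall>v\<in>V. 0 \<le> \<epsilon> * w v - \<sigma> * \<bar>\<mu> v\<bar> + s * \<mu> v"
    using exists_shift_nonneg[OF fin w0 pair _ m \<epsilon>] unfolding \<sigma>_def by blast
  define z where "z = (\<Sum>v\<in>V. (\<epsilon> * w v - \<sigma> * \<bar>\<mu> v\<bar> + s * \<mu> v) *\<^sub>R v)"
  have "(\<Sum>v\<in>V. \<epsilon> * w v - \<sigma> * \<bar>\<mu> v\<bar> + s * \<mu> v) = \<epsilon> * sum w V - \<sigma> * m + s * sum \<mu> V"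
    unfolding m_def by (simp add: sum.distrib sum_subtractf sum_distrib_left)
  then have "barycentric_coords V z (\<lambda>v. \<epsilon> * w v - \<sigma> * \<bar>\<mu> v\<bar> + s * \<mu> v)"
    unfolding barycentric_coords_def z_def using s w1 \<mu>0 m by (simp add: \<sigma>_def)
  then have "z \<in> convex hull V" using convex_hull_finite_barycentric[OF fin] by blast
  moreover have "z = \<epsilon> *\<^sub>R y - (\<sigma> * m) *\<^sub>R (\<Sum>v\<in>V. (\<bar>\<mu> v\<bar> / m) *\<^sub>R v)
                    + s *\<^sub>R (\<Sum>v\<in>V. \<mu> v *\<^sub>R v)"
    unfolding z_def wy[symmetric] using m
    by (simp add: scaleR_add_left scaleR_diff_left sum.distrib sum_subtractf scaleR_sum_right)
  moreover have "\<sigma> * m = \<epsilon> - 1" unfolding \<sigma>_def using m by simp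
  ultimately show ?thesis using that[of s] by (simp add: scaleR_diff_left algebra_simps)
qed

lemma zero_sum_coefficients_of_vector:
  assumes "finite V" "affine hull V = UNIV" "v0 \<in> V"
  obtains \<mu> where "sum \<mu> V = 0" "(\<Sum>v\<in>V. \<mu> v *\<^sub>R v) = u"
proof -
  obtain \<alpha> where \<alpha>: "sum \<alpha> V = 1" "(\<Sum>v\<in>V. \<alpha> v *\<^sub>R v) = v0 + u"
    using assms(2) unfolding affine_hull_finite[OF assms(1)] by blast
  define \<mu> where "\<mu> v = \<alpha> v - (if v = v0 then 1 else 0)" for v
  have "sum \<mu> V = 0" unfolding \<mu>_def using \<alpha> assms by (simp add: sum_subtractf)
  moreover have "(\<Sum>v\<in>V. \<mu> v *\<^sub>R v) = (\<Sum>v\<in>V. \<alpha> v *\<^sub>R v - (if v = v0 then v0 else 0))"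
    unfolding \<mu>_def by (intro sum.cong) (auto simp: scaleR_diff_left)
  then have "(\<Sum>v\<in>V. \<mu> v *\<^sub>R v) = u" using \<alpha> assms by (simp add: sum_subtractf)
  ultimately show ?thesis using that by blast
qed

lemma convex_proj_perp: "convex S \<Longrightarrow> convex (proj_perp u S)"
  unfolding proj_perp_def
  by (intro convex_linear_image linearI) (simp_all add: inner_add_left algebra_simps)

lemma proj_perp_subset_hyperplane: "norm u = 1 \<Longrightarrow> proj_perp u S \<subseteq> {x. x \<bullet> u = 0}"
  unfolding proj_perp_def by (auto simp: inner_diff_left dot_square_norm)

lemma scaled_proj_perp_translate_subset:
  fixes V K :: "'a::euclidean_space set"
  assumes u: "norm u = 1" and fin: "finite V" and aff: "affine hull V = UNIV"
    and "K \<subseteq> convex hull V"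
    and pair: "\<And>y w a b. y \<in> K \<Longrightarrow> barycentric_coords V y w \<Longrightarrow> a \<in> V \<Longrightarrow> b \<in> V \<Longrightarrow> a \<noteq> b
      \<Longrightarrow> \<delta> \<le> w a + w b"
    and \<epsilon>: "2 * (\<epsilon> - 1) \<le> \<epsilon> * \<delta>" "\<epsilon> \<ge> 0"
  shows "\<exists>t. t \<bullet> u = 0 \<and>
    (\<lambda>x. x + t) ` ((\<lambda>x. \<epsilon> *\<^sub>R x) ` proj_perp u K) \<subseteq> proj_perp u (convex hull V)"
proof -
  define p where "p x = x - (x \<bullet> u) *\<^sub>R u" for x :: 'a
  have uu: "u \<bullet> u = 1" using u by (simp add: dot_square_norm)
  have pu: "p x \<bullet> u = 0" for x unfolding p_def using uu by (simp add: inner_diff_left)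
  have p_comb: "p (r *\<^sub>R x + q *\<^sub>R y + s *\<^sub>R u) = r *\<^sub>R p x + q *\<^sub>R p y" for r q s x y
    unfolding p_def using uu by (simp add: inner_add_left algebra_simps)
  have "V \<noteq> {}" using aff by auto
  then obtain \<mu> where \<mu>: "sum \<mu> V = 0" "(\<Sum>v\<in>V. \<mu> v *\<^sub>R v) = u"
    using zero_sum_coefficients_of_vector[OF fin aff] by blast
  define m where "m = (\<Sum>v\<in>V. \<bar>\<mu> v\<bar>)"
  have "m > 0"
  proof (rule ccontr)
    assume "\<not> m > 0"
    then have "m = 0" unfolding m_def by (meson not_less order_antisym sum_nonneg abs_ge_zero)
    then have "\<forall>v\<in>V. \<mu> v = 0" unfolding m_def using fin by (simp add: sum_nonneg_eq_0_iff)
    then show False using \<mu>(2) u by simp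
  qed
  define c where "c = (\<Sum>v\<in>V. (\<bar>\<mu> v\<bar> / m) *\<^sub>R v)"
  show ?thesis
  proof (intro exI conjI)
    show "((1 - \<epsilon>) *\<^sub>R p c) \<bullet> u = 0" using pu by simp
    have "\<epsilon> *\<^sub>R p y + (1 - \<epsilon>) *\<^sub>R p c \<in> p ` (convex hull V)" if "y \<in> K" for y
    proof -
      obtain w where w: "barycentric_coords V y w"
        using \<open>y \<in> K\<close> \<open>K \<subseteq> convex hull V\<close> convex_hull_finite_barycentric[OF fin] by blast
      obtain s where "\<epsilon> *\<^sub>R y + (1 - \<epsilon>) *\<^sub>R c + s *\<^sub>R u \<in> convex hull V"
        using scaled_point_shift_in_convex_hull[OF fin w pair[OF \<open>y \<in> K\<close> w] \<mu>(1) _ \<epsilon>] \<open>m > 0\<close> \<open>y \<in> K\<close>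
        unfolding c_def m_def \<mu>(2) by blast
      then show ?thesis using p_comb by (metis image_eqI)
    qed
    then show "(\<lambda>x. x + (1 - \<epsilon>) *\<^sub>R p c) ` ((\<lambda>x. \<epsilon> *\<^sub>R x) ` proj_perp u K)
        \<subseteq> proj_perp u (convex hull V)"
      unfolding proj_perp_def p_def[symmetric] by auto
  qed
qed

lemma translate_into_rel_interior_if_scaled:
  fixes S P :: "'a::euclidean_space set"
  assumes P: "convex P" "P \<noteq> {}" "P \<subseteq> H" and H: "subspace H" "t \<in> H"
    and \<epsilon>: "\<epsilon> > 1" and sub: "(\<lambda>x. x + t) ` ((\<lambda>x. \<epsilon> *\<^sub>R x) ` S) \<subseteq> P"
  shows "\<exists>t'\<in>H. (\<lambda>x. x + t') ` S \<subseteq> rel_interior P"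
proof -
  obtain q where q: "q \<in> rel_interior P" using rel_interior_eq_empty P by blast
  define e where "e = 1 - 1 / \<epsilon>"
  have e: "0 < e" "e \<le> 1" unfolding e_def using \<epsilon> by auto
  \<comment> \<open>Move the scaled copy a fraction \<open>e\<close> of the way towards \<open>q\<close>; this undoes the scaling by \<open>\<epsilon>\<close>.\<close>
  have "k + (t /\<^sub>R \<epsilon> + e *\<^sub>R q) \<in> rel_interior P" if "k \<in> S" for k
  proof -
    define x where "x = \<epsilon> *\<^sub>R k + t"
    have "x \<in> P" using sub that unfolding x_def by blast
    then have "x - e *\<^sub>R (x - q) \<in> rel_interior P"
      using rel_interior_closure_convex_shrink[OF P(1) q _ e] closure_subset by blast
    moreover have "x - e *\<^sub>R (x - q) = (1 / \<epsilon>) *\<^sub>R x + e *\<^sub>R q"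
      unfolding e_def by (simp add: algebra_simps)
    moreover have "(1 / \<epsilon>) *\<^sub>R x = k + t /\<^sub>R \<epsilon>"
      unfolding x_def using \<epsilon> by (simp add: scaleR_add_right divide_inverse)
    ultimately show ?thesis by (simp add: add.assoc)
  qed
  moreover have "t /\<^sub>R \<epsilon> + e *\<^sub>R q \<in> H"
    using H q rel_interior_subset P(3) by (blast intro: subspace_add subspace_scale)
  ultimately show ?thesis by blast
qed

lemma proj_perp_translate_into_rel_interior_if_scaled:
  fixes \<Delta> K :: "'a::euclidean_space set"
  assumes u: "norm u = 1" and "convex \<Delta>" "\<Delta> \<noteq> {}" "\<epsilon> > 1"
    and "t \<bullet> u = 0" "(\<lambda>x. x + t) ` ((\<lambda>x. \<epsilon> *\<^sub>R x) ` proj_perp u K) \<subseteq> proj_perp u \<Delta>"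
  shows "\<exists>t. t \<bullet> u = 0 \<and> (\<lambda>x. x + t) ` proj_perp u K \<subseteq> rel_interior (proj_perp u \<Delta>)"
proof -
  have "convex (proj_perp u \<Delta>)" "proj_perp u \<Delta> \<noteq> {}"
    using convex_proj_perp assms by (auto simp: proj_perp_def)
  then show ?thesis
    using translate_into_rel_interior_if_scaled[OF _ _ proj_perp_subset_hyperplane[OF u]
        subspace_hyperplane2 _ \<open>\<epsilon> > 1\<close>] assms by blast
qed

lemma full_dim_simplex_vertices:
  fixes \<Delta> :: "'a::euclidean_space set"
  assumes "int DIM('a) simplex \<Delta>"
  obtains V where "\<not> affine_dependent V" "finite V" "int (card V) = int DIM('a) + 1"
    "affine hull V = UNIV" "\<Delta> = convex hull V"
proof -
  obtain V where V: "\<not> affine_dependent V" "int (card V) = int DIM('a) + 1" "\<Delta> = convex hull V"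
    using assms unfolding simplex_def by blast
  moreover have "affine hull V = UNIV"
    using aff_dim_affine_independent[OF V(1)] V(2) aff_dim_eq_full by fastforce
  ultimately show ?thesis using that aff_independent_finite by blast
qed

theorem lemma3p1:
  fixes \<Delta> K :: "'a::euclidean_space set"
  assumes simp: "(int DIM('a)) simplex \<Delta>"
    and "compact K" and "convex K" and "K \<subseteq> \<Delta>"
    and faces: "\<And>F. F face_of \<Delta> \<Longrightarrow> aff_dim F \<le> int DIM('a) - 2 \<Longrightarrow> K \<inter> F = {}"
  shows "(\<forall>u. norm u = 1 \<longrightarrow>
            (\<exists>t. t \<bullet> u = 0 \<and>
                 (\<lambda>x. x + t) ` proj_perp u K \<subseteq> rel_interior (proj_perp u \<Delta>)))
       \<and> (\<exists>\<epsilon>>1. \<forall>u. norm u = 1 \<longrightarrow>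
            (\<exists>t. t \<bullet> u = 0 \<and>
                 (\<lambda>x. x + t) ` ((\<lambda>x. \<epsilon> *\<^sub>R x) ` proj_perp u K) \<subseteq> proj_perp u \<Delta>))"
proof -
  obtain V where indV: "\<not> affine_dependent V" and finV: "finite V"
    and cardV: "int (card V) = int DIM('a) + 1" and affV: "affine hull V = UNIV"
    and DV: "\<Delta> = convex hull V"
    using full_dim_simplex_vertices[OF simp] by blast
  have "K \<inter> convex hull (V - {a, b}) = {}" if "a \<in> V" "b \<in> V" "a \<noteq> b" for a b
  proof (rule faces)
    show "convex hull (V - {a, b}) face_of \<Delta>"
      unfolding DV using face_of_convex_hull_affine_independent[OF indV] by blast
    show "aff_dim (convex hull (V - {a, b})) \<le> int DIM('a) - 2"
      using aff_dim_convex_hull_Diff_pair[OF indV that] cardV by simp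
  qed
  then obtain \<delta> where \<delta>: "0 < \<delta>" "\<delta> \<le> 1" and pair: "\<And>y w a b. y \<in> K \<Longrightarrow>
      barycentric_coords V y w \<Longrightarrow> a \<in> V \<Longrightarrow> b \<in> V \<Longrightarrow> a \<noteq> b \<Longrightarrow> \<delta> \<le> w a + w b"
    using pair_weights_bounded_below[OF finV \<open>compact K\<close>] by blast
  define \<epsilon> where "\<epsilon> = 2 / (2 - \<delta>)"
  have \<epsilon>: "\<epsilon> > 1" "2 * (\<epsilon> - 1) \<le> \<epsilon> * \<delta>" "\<epsilon> \<ge> 0"
    unfolding \<epsilon>_def using \<delta> by (simp_all add: field_simps)
  have "K \<subseteq> convex hull V" using \<open>K \<subseteq> \<Delta>\<close> DV by simp
  then have ii: "\<exists>t. t \<bullet> u = 0 \<and>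
      (\<lambda>x. x + t) ` ((\<lambda>x. \<epsilon> *\<^sub>R x) ` proj_perp u K) \<subseteq> proj_perp u \<Delta>" if "norm u = 1" for u
    unfolding DV by (rule scaled_proj_perp_translate_subset[OF that finV affV _ pair \<epsilon>(2,3)])
  have "convex \<Delta>" "\<Delta> \<noteq> {}" using DV affV by auto
  then have "\<exists>t. t \<bullet> u = 0 \<and> (\<lambda>x. x + t) ` proj_perp u K \<subseteq> rel_interior (proj_perp u \<Delta>)"
    if "norm u = 1" for u
    using ii[OF that] proj_perp_translate_into_rel_interior_if_scaled[OF that _ _ \<epsilon>(1)] by blast
  with ii \<epsilon>(1) show ?thesis by blast
qed

end
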